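(* Let $\mathbb{F}$ be a field, $T_1,T_2\subseteq\mathbb{F}$ sets of size $n$, and $d,\ell,s,r$ natural numbers with $d\ge\ell$ and $r=s-\lfloor\frac{d-\ell}{n}\rfloor$. Let $f\colon T_1\times T_2\to\mathbb{F}_{<s}[z_1,z_2]$, and let $P=\sum_{i=\ell}^dP_i(x_1)x_2^{d-i}$ be a polynomial of total degree at most $d$ (so $\deg P_i\le i$) with $\Delta^{(s)}_{\mathrm{mult}}(f,\mathrm{Enc}^{(s)}_{T_1\times T_2}(P))<\frac12n^2(s-\frac dn)$. With $g\colon T_1\to\mathbb{F}_{<r}[z_1]$ and $w\colon T_1\times[r]\to\mathbb{Z}_{\ge0}$ defined from $f$ as below, \[\Gamma^{s,d,\ell}_w(g,P_\ell)\le\Delta^{(s)}_{\mathrm{mult}}\big(f,\mathrm{Enc}^{(s)}_{T_1\times T_2}(P)\big)<\frac12n^2\Big(s-\frac dn\Big).\]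
   Context: Encodings: $\mathrm{Enc}^{(s)}_{T_1\times T_2}(P)(a,b)=P(a+z_1,b+z_2)\bmod\langle z_1,z_2\rangle^s$; for univariate $G$ and $t\ge1$, $\mathrm{Enc}^{(t)}_{T_2}(G)(b)=G(b+z_2)\bmod z_2^t$. $d^{(t)}_{\min}(Q)$ is the minimum of $t$ and the lowest degree of a monomial with nonzero coefficient in $Q$ ($t$ if $Q=0$); $\Delta^{(t)}_{\mathrm{mult}}(f,g)=\sum_{\mathbf a}(t-d^{(t)}_{\min}(f(\mathbf a)-g(\mathbf a)))$ over the domain. Write $f(a,b)=\sum_{i,j}f_{(i,j)}(a,b)z_1^iz_2^j$. For $a\in T_1$ and $i\in[r]=\{0,\dots,r-1\}$, let $f^{(i,a)}\colon T_2\to\mathbb{F}_{<s-i}[z_2]$, $f^{(i,a)}(b)=\sum_{j\in[s-i]}f_{(i,j)}(a,b)z_2^j$. Let $G^{(i,a)}\in\mathbb{F}_{\le d-\ell}[x_2]$ be the (unique) polynomial of degree $\le d-\ell$ with $\Delta^{(s-i)}_{\mathrm{mult}}(f^{(i,a)},\mathrm{Enc}^{(s-i)}(G^{(i,a)}))<\frac12((s-i)n-(d-\ell))$ if one exists, and $G^{(i,a)}=0$ otherwise. Set $w(a,i)=\min\{\Delta^{(s-i)}_{\mathrm{mult}}(f^{(i,a)},\mathrm{Enc}^{(s-i)}(G^{(i,a)})),\frac n2((s-i)-\frac{d-\ell}{n})\}$ and $g(a)=\sum_{i\in[r]}\mathrm{Coeff}_{x_2^{d-\ell}}(G^{(i,a)})z_1^i$.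 Finally, with $A_i(g,R)=\{a\in T_1:\max\{j\in[r+1]:g(a)\equiv R(a+z_1)\bmod\langle z_1\rangle^j\}=i\}$ for $i\in[r+1]$, $\Gamma^{s,d,\ell}_w(g,R)=\sum_{i=0}^{r-1}\sum_{a\in A_i(g,R)}\max\{n((s-i)-\frac{d-\ell}{n})-w(a,i),\max_{j<i}w(a,j)\}+\sum_{a\in A_r(g,R)}\max_{j<r}w(a,j)$ (empty maxima ignored). *)

theory Defs
  imports "HOL-Computational_Algebra.Polynomial" Complex_Main
begin

text \<open>Truncated bivariate polynomials in z1, z2 are represented by their coefficient
  functions Q :: nat => nat => 'a, with Q i j the coefficient of z1^i z2^j; truncated
  univariate polynomials in z2 (resp. z1) by coefficient functions q :: nat => 'a.
  A bivariate polynomial P(x1,x2) is an element of 'a poly poly, the outer variable being x2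
  and the coefficients being polynomials in x1.\<close>

definition dmin2 :: "nat \<Rightarrow> (nat \<Rightarrow> nat \<Rightarrow> 'a::zero) \<Rightarrow> nat" where
  "dmin2 t Q = (if \<exists>i j. Q i j \<noteq> 0
                then min t (LEAST k. \<exists>i j. i + j = k \<and> Q i j \<noteq> 0) else t)"

definition dmin1 :: "nat \<Rightarrow> (nat \<Rightarrow> 'a::zero) \<Rightarrow> nat" where
  "dmin1 t q = (if \<exists>j. q j \<noteq> 0 then min t (LEAST j. q j \<noteq> 0) else t)"

definition delta2 :: "nat \<Rightarrow> 'a set \<Rightarrow> 'a set \<Rightarrow> ('a \<Rightarrow> 'a \<Rightarrow> nat \<Rightarrow> nat \<Rightarrow> 'b::ab_group_add)
    \<Rightarrow> ('a \<Rightarrow> 'a \<Rightarrow> nat \<Rightarrow> nat \<Rightarrow> 'b) \<Rightarrow> nat" where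
  "delta2 t T1 T2 f g = (\<Sum>(a, b) \<in> T1 \<times> T2. t - dmin2 t (\<lambda>i j. f a b i j - g a b i j))"

definition delta1 :: "nat \<Rightarrow> 'a set \<Rightarrow> ('a \<Rightarrow> nat \<Rightarrow> 'b::ab_group_add)
    \<Rightarrow> ('a \<Rightarrow> nat \<Rightarrow> 'b) \<Rightarrow> nat" where
  "delta1 t T f g = (\<Sum>b \<in> T. t - dmin1 t (\<lambda>j. f b j - g b j))"

text \<open>Enc^(s)(P)(a,b) = P(a+z1, b+z2) mod <z1,z2>^s, coefficient of z1^i z2^j.\<close>
definition enc2 :: "nat \<Rightarrow> 'a::comm_ring_1 poly poly \<Rightarrow> 'a \<Rightarrow> 'a \<Rightarrow> nat \<Rightarrow> nat \<Rightarrow> 'a" where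
  "enc2 s P a b i j = (if i + j < s then
      coeff (coeff (map_poly (\<lambda>p. p \<circ>\<^sub>p [:a, 1:]) (P \<circ>\<^sub>p [:[:b:], 1:])) j) i else 0)"

definition enc1 :: "nat \<Rightarrow> 'a::comm_ring_1 poly \<Rightarrow> 'a \<Rightarrow> nat \<Rightarrow> 'a" where
  "enc1 t G b j = (if j < t then coeff (G \<circ>\<^sub>p [:b, 1:]) j else 0)"

definition fia :: "nat \<Rightarrow> ('a \<Rightarrow> 'a \<Rightarrow> nat \<Rightarrow> nat \<Rightarrow> 'b::zero) \<Rightarrow> nat \<Rightarrow> 'a \<Rightarrow> 'a \<Rightarrow> nat \<Rightarrow> 'b" where
  "fia s f i a b j = (if j < s - i then f a b i j else 0)"

definition Gsel :: "nat \<Rightarrow> nat \<Rightarrow> nat \<Rightarrow> nat \<Rightarrow> 'a::field set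
    \<Rightarrow> ('a \<Rightarrow> 'a \<Rightarrow> nat \<Rightarrow> nat \<Rightarrow> 'a) \<Rightarrow> nat \<Rightarrow> 'a \<Rightarrow> 'a poly" where
  "Gsel s d l n T2 f i a =
     (if \<exists>G. degree G \<le> d - l \<and>
            real (delta1 (s - i) T2 (fia s f i a) (enc1 (s - i) G))
              < 1/2 * (real (s - i) * real n - real (d - l))
      then (THE G. degree G \<le> d - l \<and>
            real (delta1 (s - i) T2 (fia s f i a) (enc1 (s - i) G))
              < 1/2 * (real (s - i) * real n - real (d - l)))
      else 0)"

definition wfun :: "nat \<Rightarrow> nat \<Rightarrow> nat \<Rightarrow> nat \<Rightarrow> 'a::field set
    \<Rightarrow> ('a \<Rightarrow> 'a \<Rightarrow> nat \<Rightarrow> nat \<Rightarrow> 'a) \<Rightarrow> 'a \<Rightarrow> nat \<Rightarrow> real" where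
  "wfun s d l n T2 f a i =
     min (real (delta1 (s - i) T2 (fia s f i a) (enc1 (s - i) (Gsel s d l n T2 f i a))))
         (real n / 2 * (real (s - i) - real (d - l) / real n))"

definition gfun :: "nat \<Rightarrow> nat \<Rightarrow> nat \<Rightarrow> nat \<Rightarrow> nat \<Rightarrow> 'a::field set
    \<Rightarrow> ('a \<Rightarrow> 'a \<Rightarrow> nat \<Rightarrow> nat \<Rightarrow> 'a) \<Rightarrow> 'a \<Rightarrow> nat \<Rightarrow> 'a" where
  "gfun r s d l n T2 f a i = (if i < r then coeff (Gsel s d l n T2 f i a) (d - l) else 0)"

text \<open>A_i(g,R): g(a) = R(a+z1) mod z1^j means agreement of the coefficients of z1^k, k < j.\<close>
definition Aset :: "nat \<Rightarrow> 'a::comm_ring_1 set \<Rightarrow> ('a \<Rightarrow> nat \<Rightarrow> 'a) \<Rightarrow> 'a poly \<Rightarrow> nat \<Rightarrow> 'a set" where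
  "Aset r T1 g R i = {a \<in> T1. Max {j. j \<le> r \<and> (\<forall>k<j. g a k = coeff (R \<circ>\<^sub>p [:a, 1:]) k)} = i}"

definition Gamma :: "nat \<Rightarrow> nat \<Rightarrow> nat \<Rightarrow> nat \<Rightarrow> nat \<Rightarrow> 'a::comm_ring_1 set
    \<Rightarrow> ('a \<Rightarrow> nat \<Rightarrow> real) \<Rightarrow> ('a \<Rightarrow> nat \<Rightarrow> 'a) \<Rightarrow> 'a poly \<Rightarrow> real" where
  "Gamma s d l n r T1 w g R =
     (\<Sum>i<r. \<Sum>a \<in> Aset r T1 g R i.
        (if i = 0 then real n * (real (s - i) - real (d - l) / real n) - w a i
         else max (real n * (real (s - i) - real (d - l) / real n) - w a i)
                  (Max (w a ` {..<i}))))
   + (\<Sum>a \<in> Aset r T1 g R r. (if r = 0 then 0 else Max (w a ` {..<r})))"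

end

theory Submission
  imports Defs
begin

(* Fix a in T1 and i < r. The coefficient of z1^i in f(a, -) is a received word for the
   univariate multiplicity code of order s - i and degree d - l, and the corresponding row of
   Enc(P) is the encoding of H, the coefficient of z1^i in P(a + z1, x2). Its distance D(a,i)
   from that encoding is at most the contribution of the column {a} x T2 to Delta(f, Enc P).
   Since a nonzero polynomial has at most deg-many roots counted with multiplicity, the code has
   minimum distance (s - i) n - (d - l); so G^(i,a) = H as soon as D(a,i) is below half of it,
   which gives w(a,i) <= D(a,i). For a in A_i the x2^(d-l)-coefficients of G^(i,a) and H differ,
   and the triangle inequality gives (s - i) n - (d - l) - w(a,i) <= D(a,i). Summing over the
   partition of T1 into A_0, ..., A_r bounds Gamma by Delta(f, Enc P). *)

lemma dmin1_le: "dmin1 t q \<le> t"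
  unfolding dmin1_def by auto

lemma eq_0_below_dmin1: "j < dmin1 t q \<Longrightarrow> q j = 0"
  unfolding dmin1_def by (auto split: if_splits dest: not_less_Least)

lemma dmin1_le_nonzero: "q j \<noteq> 0 \<Longrightarrow> dmin1 t q \<le> j"
  using eq_0_below_dmin1 not_le by blast

lemma le_dmin1I:
  assumes "m \<le> t" and "\<And>j. j < m \<Longrightarrow> q j = 0"
  shows "m \<le> dmin1 t q"
proof (cases "\<exists>j. q j \<noteq> 0")
  case True
  then have "q (LEAST j. q j \<noteq> 0) \<noteq> 0" by (rule LeastI_ex)
  then have "m \<le> (LEAST j. q j \<noteq> 0)" using assms(2) not_le by blast
  with True assms(1) show ?thesis unfolding dmin1_def by simp
qed (use assms(1) in \<open>simp add: dmin1_def\<close>)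

lemma neq_0_at_dmin1:
  assumes "dmin1 t q < t"
  shows "q (dmin1 t q) \<noteq> 0"
proof -
  from assms have ex: "\<exists>j. q j \<noteq> 0" and "dmin1 t q = (LEAST j. q j \<noteq> 0)"
    by (auto simp: dmin1_def split: if_splits)
  then show ?thesis using LeastI_ex[OF ex] by simp
qed

lemma dmin1_diff_commute:
  fixes u v :: "nat \<Rightarrow> 'b::ab_group_add"
  shows "dmin1 t (\<lambda>j. u j - v j) = dmin1 t (\<lambda>j. v j - u j)"
proof -
  have "(\<lambda>j. u j - v j \<noteq> 0) = (\<lambda>j. v j - u j \<noteq> 0)"
    by (auto simp: fun_eq_iff)
  then show ?thesis unfolding dmin1_def by (simp only:)
qed

lemma dmin2_le: "dmin2 t Q \<le> t"
  unfolding dmin2_def by auto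

lemma dmin2_le_nonzero: "Q i j \<noteq> 0 \<Longrightarrow> dmin2 t Q \<le> i + j"
  unfolding dmin2_def by (auto intro!: min.coboundedI2 Least_le)

lemma dmin2_le_row: "dmin2 t Q \<le> i + dmin1 (t - i) (\<lambda>j. if j < t - i then Q i j else 0)"
  (is "_ \<le> i + dmin1 (t - i) ?q")
proof (cases "dmin1 (t - i) ?q < t - i")
  case True
  then have "Q i (dmin1 (t - i) ?q) \<noteq> 0"
    using neq_0_at_dmin1 by fastforce
  then show ?thesis by (rule dmin2_le_nonzero)
next
  case False
  then show ?thesis using dmin2_le[of t Q] by linarith
qed

lemma delta1_triangle:
  fixes u v w :: "'a \<Rightarrow> nat \<Rightarrow> 'b::ab_group_add"
  shows "delta1 t T u w \<le> delta1 t T u v + delta1 t T v w"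
  unfolding delta1_def sum.distrib[symmetric]
proof (rule sum_mono)
  fix b
  have "min (dmin1 t (\<lambda>j. u b j - v b j)) (dmin1 t (\<lambda>j. v b j - w b j))
      \<le> dmin1 t (\<lambda>j. u b j - w b j)"
    by (intro le_dmin1I) (auto simp: dmin1_le min.coboundedI1 dest!: eq_0_below_dmin1)
  then show "t - dmin1 t (\<lambda>j. u b j - w b j)
      \<le> t - dmin1 t (\<lambda>j. u b j - v b j) + (t - dmin1 t (\<lambda>j. v b j - w b j))"
    by linarith
qed

lemma delta1_commute:
  fixes u v :: "'a \<Rightarrow> nat \<Rightarrow> 'b::ab_group_add"
  shows "delta1 t T u v = delta1 t T v u"
  unfolding delta1_def by (subst dmin1_diff_commute) (rule refl)

lemma delta1_fia_le_delta2:
  fixes f g :: "'a \<Rightarrow> 'a \<Rightarrow> nat \<Rightarrow> nat \<Rightarrow> 'b::ab_group_add"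
  shows "delta1 (s - i) T2 (fia s f i a) (fia s g i a) \<le> delta2 s {a} T2 f g"
proof -
  have row: "(\<lambda>j. fia s f i a b j - fia s g i a b j)
      = (\<lambda>j. if j < s - i then f a b i j - g a b i j else 0)" for b
    by (simp add: fun_eq_iff fia_def)
  have "delta1 (s - i) T2 (fia s f i a) (fia s g i a)
      \<le> (\<Sum>b\<in>T2. s - dmin2 s (\<lambda>i j. f a b i j - g a b i j))"
    unfolding delta1_def row
  proof (rule sum_mono)
    fix b
    show "s - i - dmin1 (s - i) (\<lambda>j. if j < s - i then f a b i j - g a b i j else 0)
        \<le> s - dmin2 s (\<lambda>i j. f a b i j - g a b i j)"
      using dmin2_le_row[of s "\<lambda>i j. f a b i j - g a b i j" i] by linarith
  qed
  also have "\<dots> = delta2 s {a} T2 f g"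
    unfolding delta2_def by (simp add: sum.cartesian_product[symmetric])
  finally show ?thesis .
qed

lemma delta2_sum_columns: "delta2 s T1 T2 f g = (\<Sum>a\<in>T1. delta2 s {a} T2 f g)"
  unfolding delta2_def by (simp add: sum.cartesian_product[symmetric])

lemma pcompose_power: "(p ^ k) \<circ>\<^sub>p q = (p \<circ>\<^sub>p q) ^ k"
  for p q :: "'a::comm_semiring_1 poly"
  by (induct k) (simp_all add: pcompose_mult pcompose_1)

lemma coeff_pcompose_order_neq_0:
  fixes H :: "'a::idom poly"
  assumes "H \<noteq> 0"
  shows "coeff (H \<circ>\<^sub>p [:b, 1:]) (order b H) \<noteq> 0"
proof -
  obtain q where q: "H = [:- b, 1:] ^ order b H * q" and "\<not> [:- b, 1:] dvd q"
    using order_decomp[OF assms] by blast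
  then have "poly q b \<noteq> 0" by (simp add: dvd_iff_poly_eq_0)
  have "H \<circ>\<^sub>p [:b, 1:] = monom 1 (order b H) * (q \<circ>\<^sub>p [:b, 1:])"
    by (subst q) (simp add: pcompose_mult pcompose_power pcompose_pCons monom_altdef)
  then have "coeff (H \<circ>\<^sub>p [:b, 1:]) (order b H) = poly q b"
    by (simp add: coeff_monom_mult pcompose_coeff_0)
  with \<open>poly q b \<noteq> 0\<close> show ?thesis by simp
qed

lemma sum_order_le_degree_on:
  fixes H :: "'a::idom poly"
  assumes "finite T" and "H \<noteq> 0"
  shows "(\<Sum>b\<in>T. order b H) \<le> degree H"
proof -
  have "(\<Sum>b\<in>T. order b H) = (\<Sum>b\<in>T \<inter> {x. poly H x = 0}. order b H)"
    using assms by (intro sum.mono_neutral_right) (auto simp: order_root)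
  also have "\<dots> \<le> (\<Sum>b | poly H b = 0. order b H)"
    using assms(2) by (intro sum_mono2 poly_roots_finite) auto
  also have "\<dots> \<le> degree H"
    using assms(2) by (rule sum_order_le_degree)
  finally show ?thesis .
qed

lemma enc1_diff: "enc1 t G b j - enc1 t H b j = enc1 t (G - H) b j"
  unfolding enc1_def by (simp add: pcompose_diff)

lemma dmin1_enc1_le_order:
  fixes H :: "'a::idom poly"
  assumes "H \<noteq> 0"
  shows "dmin1 t (enc1 t H b) \<le> order b H"
proof (cases "order b H < t")
  case True
  then have "enc1 t H b (order b H) \<noteq> 0"
    using coeff_pcompose_order_neq_0[OF assms] by (simp add: enc1_def)
  then show ?thesis by (rule dmin1_le_nonzero)
next
  case False
  then show ?thesis using dmin1_le[of t "enc1 t H b"] by linarith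
qed

lemma delta1_enc1_ge:
  fixes G H :: "'a::idom poly"
  assumes "finite T" and "card T = n" and "G \<noteq> H"
    and "degree G \<le> m" and "degree H \<le> m"
  shows "real t * real n - real m \<le> real (delta1 t T (enc1 t G) (enc1 t H))"
proof -
  define K where "K = G - H"
  have "K \<noteq> 0" and "degree K \<le> m"
    using assms(3-5) degree_diff_le by (auto simp: K_def)
  have "t * n = (\<Sum>b\<in>T. t)"
    using assms(2) by simp
  also have "\<dots> \<le> (\<Sum>b\<in>T. (t - dmin1 t (enc1 t K b)) + order b K)"
  proof (rule sum_mono)
    fix b
    show "t \<le> (t - dmin1 t (enc1 t K b)) + order b K"
      using dmin1_enc1_le_order[OF \<open>K \<noteq> 0\<close>, of t b] by linarith
  qed
  also have "\<dots> = (\<Sum>b\<in>T. t - dmin1 t (enc1 t K b)) + (\<Sum>b\<in>T. order b K)"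
    by (rule sum.distrib)
  also have "(\<Sum>b\<in>T. t - dmin1 t (enc1 t K b)) = delta1 t T (enc1 t G) (enc1 t H)"
    by (simp add: delta1_def enc1_diff K_def)
  also have "(\<Sum>b\<in>T. order b K) \<le> m"
    using sum_order_le_degree_on[OF assms(1) \<open>K \<noteq> 0\<close>] \<open>degree K \<le> m\<close> by linarith
  finally have "t * n \<le> delta1 t T (enc1 t G) (enc1 t H) + m"
    by simp
  then show ?thesis by (simp flip: of_nat_mult of_nat_add)
qed

lemma enc1_unique_decoding:
  fixes G H :: "'a::idom poly"
  assumes "finite T" and "card T = n" and "degree G \<le> m" and "degree H \<le> m"
    and "real (delta1 t T F (enc1 t G)) + real (delta1 t T F (enc1 t H)) < real t * real n - real m"
  shows "G = H"
proof (rule ccontr)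
  assume "G \<noteq> H"
  then have "real t * real n - real m \<le> real (delta1 t T (enc1 t G) (enc1 t H))"
    using delta1_enc1_ge assms(1-4) by blast
  also have "\<dots> \<le> real (delta1 t T F (enc1 t G)) + real (delta1 t T F (enc1 t H))"
    using delta1_triangle[of t T "enc1 t G" "enc1 t H" F] delta1_commute[of t T "enc1 t G" F]
    by simp
  finally show False using assms(5) by simp
qed

lemma Gsel_eqI:
  fixes T2 :: "'a::field set"
  assumes "finite T2" and "card T2 = n" and "degree G \<le> d - l"
    and "real (delta1 (s - i) T2 (fia s f i a) (enc1 (s - i) G))
           < 1/2 * (real (s - i) * real n - real (d - l))"
  shows "Gsel s d l n T2 f i a = G"
proof -
  have "G' = G" if "degree G' \<le> d - l"
    and "real (delta1 (s - i) T2 (fia s f i a) (enc1 (s - i) G'))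
           < 1/2 * (real (s - i) * real n - real (d - l))" for G'
    by (rule enc1_unique_decoding[OF assms(1,2) that(1) assms(3),
          where t = "s - i" and F = "fia s f i a"])
      (use that(2) assms(4) in argo)
  with assms(3,4) show ?thesis
    unfolding Gsel_def by (subst if_P) (blast, rule the_equality, blast+)
qed

lemma degree_Gsel_le:
  fixes T2 :: "'a::field set"
  assumes "finite T2" and "card T2 = n"
  shows "degree (Gsel s d l n T2 f i a) \<le> d - l"
proof (cases "\<exists>G. degree G \<le> d - l \<and> real (delta1 (s - i) T2 (fia s f i a) (enc1 (s - i) G))
                 < 1/2 * (real (s - i) * real n - real (d - l))")
  case True
  then show ?thesis using Gsel_eqI[OF assms] by metis
next
  case False
  then show ?thesis unfolding Gsel_def by (subst if_not_P) simp_all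
qed

lemma wfun_le_delta1:
  fixes T2 :: "'a::field set"
  assumes "finite T2" and "card T2 = n" and "0 < n" and "degree H \<le> d - l"
  shows "wfun s d l n T2 f a i \<le> real (delta1 (s - i) T2 (fia s f i a) (enc1 (s - i) H))"
proof -
  define dist where "dist = real (s - i) * real n - real (d - l)"
  let ?D = "\<lambda>G. real (delta1 (s - i) T2 (fia s f i a) (enc1 (s - i) G))"
  have "real n / 2 * (real (s - i) - real (d - l) / real n) = dist / 2"
    using assms(3) by (simp add: dist_def field_simps)
  then have w: "wfun s d l n T2 f a i = min (?D (Gsel s d l n T2 f i a)) (dist / 2)"
    by (simp only: wfun_def)
  show ?thesis
  proof (cases "?D H < dist / 2")
    case True
    then have "?D H < 1/2 * dist" by simp
    then have "?D H < 1/2 * (real (s - i) * real n - real (d - l))" unfolding dist_def .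
    then have "Gsel s d l n T2 f i a = H"
      by (rule Gsel_eqI[OF assms(1,2,4)])
    then show ?thesis using w by simp
  next
    case False
    then have "dist / 2 \<le> ?D H" by linarith
    with w show ?thesis by (simp add: min_le_iff_disj)
  qed
qed

lemma Gsel_neq_imp_delta1_ge:
  fixes T2 :: "'a::field set"
  assumes "finite T2" and "card T2 = n" and "0 < n" and "degree H \<le> d - l"
    and "Gsel s d l n T2 f i a \<noteq> H"
  shows "real n * (real (s - i) - real (d - l) / real n) - wfun s d l n T2 f a i
           \<le> real (delta1 (s - i) T2 (fia s f i a) (enc1 (s - i) H))"
proof -
  define dist where "dist = real (s - i) * real n - real (d - l)"
  let ?G = "Gsel s d l n T2 f i a"
  let ?D = "\<lambda>G. real (delta1 (s - i) T2 (fia s f i a) (enc1 (s - i) G))"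
  have "dist / 2 \<le> ?D H"
  proof (rule ccontr)
    assume "\<not> dist / 2 \<le> ?D H"
    then have "?D H < 1/2 * dist" by simp
    then have "?D H < 1/2 * (real (s - i) * real n - real (d - l))" unfolding dist_def .
    then have "?G = H" by (rule Gsel_eqI[OF assms(1,2,4)])
    with assms(5) show False ..
  qed
  moreover have "dist \<le> ?D ?G + ?D H"
  proof (rule ccontr)
    assume "\<not> dist \<le> ?D ?G + ?D H"
    then have "?D ?G + ?D H < dist" by simp
    then have "?D ?G + ?D H < real (s - i) * real n - real (d - l)" unfolding dist_def .
    then have "?G = H"
      by (rule enc1_unique_decoding[OF assms(1,2) degree_Gsel_le[OF assms(1,2)] assms(4)])
    with assms(5) show False ..
  qed
  moreover have "real n / 2 * (real (s - i) - real (d - l) / real n) = dist / 2"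
    and "real n * (real (s - i) - real (d - l) / real n) = dist"
    using assms(3) by (simp_all add: dist_def field_simps)
  then have "wfun s d l n T2 f a i = min (?D ?G) (dist / 2)"
    and "real n * (real (s - i) - real (d - l) / real n) = dist"
    by (simp_all only: wfun_def)
  ultimately show ?thesis by (auto simp: min_def)
qed

definition x1_taylor_coeff :: "'a::comm_ring_1 poly poly \<Rightarrow> 'a \<Rightarrow> nat \<Rightarrow> 'a poly" where
  "x1_taylor_coeff P a i = map_poly (\<lambda>p. coeff (p \<circ>\<^sub>p [:a, 1:]) i) P"

lemma coeff_x1_taylor_coeff:
  "coeff (x1_taylor_coeff P a i) k = coeff (coeff P k \<circ>\<^sub>p [:a, 1:]) i"
  unfolding x1_taylor_coeff_def by (subst coeff_map_poly) auto

lemma degree_x1_taylor_coeff_le: "degree (x1_taylor_coeff P a i) \<le> degree P"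
  unfolding x1_taylor_coeff_def by (rule map_poly_degree_leq)

lemma x1_taylor_coeff_0 [simp]: "x1_taylor_coeff 0 a i = 0"
  by (simp add: x1_taylor_coeff_def)

lemma x1_taylor_coeff_add:
  "x1_taylor_coeff (P + Q) a i = x1_taylor_coeff P a i + x1_taylor_coeff Q a i"
  by (rule poly_eqI) (simp add: coeff_x1_taylor_coeff pcompose_add)

lemma x1_taylor_coeff_pCons:
  "x1_taylor_coeff (pCons c P) a i = pCons (coeff (c \<circ>\<^sub>p [:a, 1:]) i) (x1_taylor_coeff P a i)"
  by (rule poly_eqI) (simp add: coeff_x1_taylor_coeff coeff_pCons split: nat.splits)

lemma x1_taylor_coeff_smult_const:
  "x1_taylor_coeff (smult [:b:] P) a i = smult b (x1_taylor_coeff P a i)"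
  by (rule poly_eqI) (simp add: coeff_x1_taylor_coeff pcompose_smult)

lemma x1_taylor_coeff_pcompose:
  "x1_taylor_coeff (P \<circ>\<^sub>p [:[:b:], 1:]) a i = x1_taylor_coeff P a i \<circ>\<^sub>p [:b, 1:]"
  by (induct P)
    (simp_all add: pcompose_pCons x1_taylor_coeff_add x1_taylor_coeff_pCons
      x1_taylor_coeff_smult_const mult_pCons_left)

lemma fia_enc2: "fia s (enc2 s P) i a = enc1 (s - i) (x1_taylor_coeff P a i)"
proof (intro ext)
  fix b j
  have "coeff (coeff (map_poly (\<lambda>p. p \<circ>\<^sub>p [:a, 1:]) (P \<circ>\<^sub>p [:[:b:], 1:])) j) i
      = coeff (x1_taylor_coeff (P \<circ>\<^sub>p [:[:b:], 1:]) a i) j"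
    by (simp add: coeff_map_poly coeff_x1_taylor_coeff)
  then show "fia s (enc2 s P) i a b j = enc1 (s - i) (x1_taylor_coeff P a i) b j"
    by (simp add: fia_def enc2_def enc1_def x1_taylor_coeff_pcompose less_diff_conv add.commute)
qed

lemma Aset_coeff_neq:
  assumes "a \<in> Aset r T1 g R i" and "i < r"
  shows "g a i \<noteq> coeff (R \<circ>\<^sub>p [:a, 1:]) i"
proof
  define J where "J = {j. j \<le> r \<and> (\<forall>k<j. g a k = coeff (R \<circ>\<^sub>p [:a, 1:]) k)}"
  assume agree: "g a i = coeff (R \<circ>\<^sub>p [:a, 1:]) i"
  have "finite J" by (rule finite_subset[of _ "{..r}"]) (auto simp: J_def)
  have "Max J = i" using assms(1) by (simp add: J_def Aset_def)
  moreover have "J \<noteq> {}" by (auto simp: J_def)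
  ultimately have "i \<in> J" using Max_in[OF \<open>finite J\<close>] by blast
  with agree assms(2) have "Suc i \<in> J" by (auto simp: J_def less_Suc_eq)
  then have "Suc i \<le> Max J" by (rule Max_ge[OF \<open>finite J\<close>])
  with \<open>Max J = i\<close> show False by simp
qed

lemma Gamma_le_sum:
  fixes w :: "'a::comm_ring_1 \<Rightarrow> nat \<Rightarrow> real"
  assumes "finite T1"
    and mismatch: "\<And>i a. i < r \<Longrightarrow> a \<in> Aset r T1 g R i
       \<Longrightarrow> real n * (real (s - i) - real (d - l) / real n) - w a i \<le> S a"
    and bound: "\<And>i a. i < r \<Longrightarrow> a \<in> T1 \<Longrightarrow> w a i \<le> S a"
    and nonneg: "\<And>a. a \<in> T1 \<Longrightarrow> 0 \<le> S a"
  shows "Gamma s d l n r T1 w g R \<le> (\<Sum>a\<in>T1. S a)"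
proof -
  let ?A = "Aset r T1 g R"
  have A_sub: "?A i \<subseteq> T1" for i by (auto simp: Aset_def)
  have Max_le: "Max (w a ` {..<j}) \<le> S a" if "0 < j" and "j \<le> r" and "a \<in> T1" for a j
    using that bound by (subst Max_le_iff) auto
  have term_less: "(if i = 0 then real n * (real (s - i) - real (d - l) / real n) - w a i
      else max (real n * (real (s - i) - real (d - l) / real n) - w a i) (Max (w a ` {..<i})))
      \<le> S a" if "i < r" and "a \<in> ?A i" for i a
    using mismatch[OF that] Max_le[of i a] A_sub that by auto
  have term_r: "(if r = 0 then 0 else Max (w a ` {..<r})) \<le> S a" if "a \<in> ?A r" for a
    using Max_le[of r a] nonneg A_sub that by auto
  have "Gamma s d l n r T1 w g R \<le> (\<Sum>i<r. \<Sum>a\<in>?A i. S a) + (\<Sum>a\<in>?A r. S a)"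
    unfolding Gamma_def by (intro add_mono sum_mono term_less term_r) auto
  also have "\<dots> = (\<Sum>a\<in>(\<Union>i<Suc r. ?A i). S a)"
    using assms(1) A_sub
    by (subst sum.UNION_disjoint) (auto simp: Aset_def intro: finite_subset)
  also have "\<dots> \<le> (\<Sum>a\<in>T1. S a)"
    using A_sub nonneg by (intro sum_mono2[OF assms(1)]) auto
  finally show ?thesis .
qed

theorem lemma7p1:
  fixes T1 T2 :: "'a::field set" and n d l s r :: nat
    and f :: "'a \<Rightarrow> 'a \<Rightarrow> nat \<Rightarrow> nat \<Rightarrow> 'a" and P :: "'a poly poly"
  assumes "finite T1" and "finite T2" and "card T1 = n" and "card T2 = n"
    and "l \<le> d"
    and "int r = int s - \<lfloor>real (d - l) / real n\<rfloor>"
    and "\<forall>a\<in>T1. \<forall>b\<in>T2. \<forall>i j. s \<le> i + j \<longrightarrow> f a b i j = 0"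
    and "\<forall>k. coeff P k \<noteq> 0 \<longrightarrow> k \<le> d - l \<and> degree (coeff P k) \<le> d - k"
    and "real (delta2 s T1 T2 f (enc2 s P)) < 1/2 * real n ^ 2 * (real s - real d / real n)"
  shows "Gamma s d l n r T1 (wfun s d l n T2 f) (gfun r s d l n T2 f) (coeff P (d - l))
           \<le> real (delta2 s T1 T2 f (enc2 s P))
         \<and> real (delta2 s T1 T2 f (enc2 s P)) < 1/2 * real n ^ 2 * (real s - real d / real n)"
proof (rule conjI[OF _ assms(9)])
  have "0 < n" by (rule gr0I) (use assms(9) in simp)
  have "degree P \<le> d - l" using assms(8) by (intro degree_le) (metis not_le)
  then have deg_row: "degree (x1_taylor_coeff P a i) \<le> d - l" for a i
    using degree_x1_taylor_coeff_le order_trans by blast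
  define col where "col a = real (delta2 s {a} T2 f (enc2 s P))" for a
  have row_le_col:
    "real (delta1 (s - i) T2 (fia s f i a) (enc1 (s - i) (x1_taylor_coeff P a i))) \<le> col a" for a i
    using delta1_fia_le_delta2[of s i T2 f a "enc2 s P"] by (simp add: col_def fia_enc2)
  have "Gamma s d l n r T1 (wfun s d l n T2 f) (gfun r s d l n T2 f) (coeff P (d - l))
        \<le> (\<Sum>a\<in>T1. col a)"
  proof (rule Gamma_le_sum[OF assms(1)])
    fix i a
    assume "i < r" and "a \<in> Aset r T1 (gfun r s d l n T2 f) (coeff P (d - l)) i"
    then have "Gsel s d l n T2 f i a \<noteq> x1_taylor_coeff P a i"
      using Aset_coeff_neq by (fastforce simp: gfun_def coeff_x1_taylor_coeff)
    then show "real n * (real (s - i) - real (d - l) / real n) - wfun s d l n T2 f a i \<le> col a"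
      using Gsel_neq_imp_delta1_ge[OF assms(2,4) \<open>0 < n\<close> deg_row] row_le_col order_trans by blast
  next
    fix i a
    show "wfun s d l n T2 f a i \<le> col a"
      using wfun_le_delta1[OF assms(2,4) \<open>0 < n\<close> deg_row] row_le_col order_trans by blast
  qed (simp add: col_def)
  also have "\<dots> = real (delta2 s T1 T2 f (enc2 s P))"
    by (simp add: col_def delta2_sum_columns[of s T1])
  finally show "Gamma s d l n r T1 (wfun s d l n T2 f) (gfun r s d l n T2 f) (coeff P (d - l))
      \<le> real (delta2 s T1 T2 f (enc2 s P))" .
qed

end
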